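(* Let $p$ be an odd prime and $G$ an extraspecial $p$-group of exponent $p^2$. Let $V,B,T,Q$ be as in the context and let $\mathcal B=\{v_1,w_1,\dots,v_n,w_n\}$ be a special symplectic basis for $(B,T)$. (i) If $v,w\in V\setminus\{0\}$ are distinct with $T(v)=T(w)$, and either both $v,w\notin\ker(T)$ or both $v,w\notin\mathrm{span}(w_1)$, then $v$ and $w$ lie in the same $Q$-orbit. (ii) If $|G|=p^3$, the action of $Q$ on $V\setminus\{0\}$ has exactly $2p-2$ orbits, represented by $av_1$ and $bw_1$ with $a,b\in GF(p)\setminus\{0\}$. (iii) If $|G|>p^3$, the action of $Q$ on $V\setminus\{0\}$ has exactly $2p-1$ orbits, represented by $av_1$, $bw_1$ ($a,b\in GF(p)\setminus\{0\}$) and $v_2$.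
   Context: A special $p$-group is a finite $p$-group whose center, derived subgroup and Frattini subgroup coincide and are elementary abelian; it is extraspecial if $|Z(G)|=p$. Here $V=G/Z(G)$ is a $GF(p)$-vector space, $Z(G)$ is identified with $GF(p)$, $B:V\times V\to GF(p)$ is the nondegenerate alternating form $B(gZ(G),hZ(G))=[g,h]=ghg^{-1}h^{-1}$, and $T:V\to GF(p)$ is the linear map $T(gZ(G))=g^p$ (nonzero since $\exp(G)=p^2$). A special symplectic basis is a basis $\{v_1,w_1,\dots,v_n,w_n\}$ of $V$ with $B(v_i,w_i)=1$, $B(v_i,w_j)=B(v_i,v_j)=B(w_i,w_j)=0$ for $i\ne j$, $T(v_1)=1$ and $T(u)=0$ for all other basis vectors $u$; such a basis exists. $\mathrm{Aut}_{Z(G)}(G)$ is the group of automorphisms of $G$ acting trivially on $Z(G)$, for such $\varphi$ the map $f_\varphi:V\to V$ is $f_\varphi(gZ(G))=\varphi(g)Z(G)$, and $Q=\{f_\varphi:\varphi\in\mathrm{Aut}_{Z(G)}(G)\}$ acts on $V$ by $(f,v)\mapsto f(v)$. *)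

theory Defs
  imports "HOL-Algebra.Algebra"
begin

definition grp_center :: "('a, 'b) monoid_scheme \<Rightarrow> 'a set" where
  "grp_center G = {z \<in> carrier G. \<forall>g \<in> carrier G. z \<otimes>\<^bsub>G\<^esub> g = g \<otimes>\<^bsub>G\<^esub> z}"

definition grp_comm :: "('a, 'b) monoid_scheme \<Rightarrow> 'a \<Rightarrow> 'a \<Rightarrow> 'a" where
  "grp_comm G g h = g \<otimes>\<^bsub>G\<^esub> h \<otimes>\<^bsub>G\<^esub> inv\<^bsub>G\<^esub> g \<otimes>\<^bsub>G\<^esub> inv\<^bsub>G\<^esub> h"

definition maximal_subgroup :: "'a set \<Rightarrow> ('a, 'b) monoid_scheme \<Rightarrow> bool" where
  "maximal_subgroup H G \<longleftrightarrow> subgroup H G \<and> H \<noteq> carrier G \<and>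
     (\<forall>K. subgroup K G \<and> H \<subseteq> K \<longrightarrow> K = H \<or> K = carrier G)"

definition frattini :: "('a, 'b) monoid_scheme \<Rightarrow> 'a set" where
  "frattini G = carrier G \<inter> \<Inter> {H. maximal_subgroup H G}"

definition grp_exponent :: "('a, 'b) monoid_scheme \<Rightarrow> nat" where
  "grp_exponent G = (LEAST n. 0 < n \<and> (\<forall>g \<in> carrier G. g [^]\<^bsub>G\<^esub> n = \<one>\<^bsub>G\<^esub>))"

definition p_group :: "nat \<Rightarrow> ('a, 'b) monoid_scheme \<Rightarrow> bool" where
  "p_group p G \<longleftrightarrow> group G \<and> finite (carrier G) \<and> (\<exists>k. order G = p ^ k)"

definition elementary_abelian_subgroup :: "nat \<Rightarrow> 'a set \<Rightarrow> ('a, 'b) monoid_scheme \<Rightarrow> bool" where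
  "elementary_abelian_subgroup p H G \<longleftrightarrow> subgroup H G \<and>
     (\<forall>a \<in> H. \<forall>b \<in> H. a \<otimes>\<^bsub>G\<^esub> b = b \<otimes>\<^bsub>G\<^esub> a) \<and>
     (\<forall>a \<in> H. a [^]\<^bsub>G\<^esub> p = \<one>\<^bsub>G\<^esub>)"

definition special_p_group :: "nat \<Rightarrow> ('a, 'b) monoid_scheme \<Rightarrow> bool" where
  "special_p_group p G \<longleftrightarrow> p_group p G \<and>
     grp_center G = derived G (carrier G) \<and> grp_center G = frattini G \<and>
     elementary_abelian_subgroup p (grp_center G) G"

definition extraspecial_p_group :: "nat \<Rightarrow> ('a, 'b) monoid_scheme \<Rightarrow> bool" where
  "extraspecial_p_group p G \<longleftrightarrow> special_p_group p G \<and> card (grp_center G) = p"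

abbreviation Vsp :: "('a, 'b) monoid_scheme \<Rightarrow> 'a set monoid" where
  "Vsp G \<equiv> G Mod grp_center G"

definition AutZ :: "('a, 'b) monoid_scheme \<Rightarrow> ('a \<Rightarrow> 'a) set" where
  "AutZ G = {\<phi> \<in> iso G G. \<forall>z \<in> grp_center G. \<phi> z = z}"

(* f_phi(gZ) = phi(g)Z; as a map on cosets this is the image of the coset under phi *)
definition f_map :: "('a \<Rightarrow> 'a) \<Rightarrow> 'a set \<Rightarrow> 'a set" where
  "f_map \<phi> C = \<phi> ` C"

definition Qgrp :: "('a, 'b) monoid_scheme \<Rightarrow> ('a set \<Rightarrow> 'a set) set" where
  "Qgrp G = {f_map \<phi> | \<phi>. \<phi> \<in> AutZ G}"

definition Q_orbit :: "('a, 'b) monoid_scheme \<Rightarrow> 'a set \<Rightarrow> 'a set set" where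
  "Q_orbit G v = {f v | f. f \<in> Qgrp G}"

definition Vnz :: "('a, 'b) monoid_scheme \<Rightarrow> 'a set set" where
  "Vnz G = carrier (Vsp G) - {grp_center G}"

definition Tmap :: "nat \<Rightarrow> ('a, 'b) monoid_scheme \<Rightarrow> 'a set \<Rightarrow> 'a" where
  "Tmap p G v = (SOME g. g \<in> v) [^]\<^bsub>G\<^esub> p"

(* Scalar multiple a*v in V = the a-th power in the quotient group *)
definition smult_V :: "('a, 'b) monoid_scheme \<Rightarrow> nat \<Rightarrow> 'a set \<Rightarrow> 'a set" where
  "smult_V G a v = v [^]\<^bsub>Vsp G\<^esub> a"

(* Special symplectic basis: v_{i+1} = Z #> x i, w_{i+1} = Z #> y i for i < n;
   z \<in> Z(G) is the element identified with 1 \<in> GF(p). *)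
definition special_symplectic_basis ::
  "nat \<Rightarrow> ('a, 'b) monoid_scheme \<Rightarrow> 'a \<Rightarrow> nat \<Rightarrow> (nat \<Rightarrow> 'a) \<Rightarrow> (nat \<Rightarrow> 'a) \<Rightarrow> bool" where
  "special_symplectic_basis p G z n x y \<longleftrightarrow>
     0 < n \<and> (\<forall>i<n. x i \<in> carrier G \<and> y i \<in> carrier G) \<and>
     \<comment> \<open>basis of V over GF(p): unique expression with coefficients in {0..<p}\<close>
     bij_betw (\<lambda>(a, b). finprod (Vsp G)
                (\<lambda>i. smult_V G (a i) (grp_center G #>\<^bsub>G\<^esub> x i) \<otimes>\<^bsub>Vsp G\<^esub>
                     smult_V G (b i) (grp_center G #>\<^bsub>G\<^esub> y i)) {..<n})
       (({..<n} \<rightarrow>\<^sub>E {..<p}) \<times> ({..<n} \<rightarrow>\<^sub>E {..<p})) (carrier (Vsp G)) \<and>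
     (\<forall>i<n. grp_comm G (x i) (y i) = z) \<and>
     (\<forall>i<n. \<forall>j<n. i \<noteq> j \<longrightarrow> grp_comm G (x i) (y j) = \<one>\<^bsub>G\<^esub>) \<and>
     (\<forall>i<n. \<forall>j<n. i \<noteq> j \<longrightarrow> grp_comm G (x i) (x j) = \<one>\<^bsub>G\<^esub>) \<and>
     (\<forall>i<n. \<forall>j<n. i \<noteq> j \<longrightarrow> grp_comm G (y i) (y j) = \<one>\<^bsub>G\<^esub>) \<and>
     x 0 [^]\<^bsub>G\<^esub> p = z \<and>
     (\<forall>i<n. 0 < i \<longrightarrow> x i [^]\<^bsub>G\<^esub> p = \<one>\<^bsub>G\<^esub>) \<and>
     (\<forall>i<n. y i [^]\<^bsub>G\<^esub> p = \<one>\<^bsub>G\<^esub>)"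

end

theory Submission
  imports Defs
begin

text \<open>Every \<open>\<phi> \<in> Aut\<^bsub>Z(G)\<^esub>(G)\<close> preserves the commutator form \<open>B\<close> and the map \<open>T(g Z) = g\<^sup>p\<close>, and
  in the given basis \<open>T = B(-, w\<^sub>1)\<close>; by nondegeneracy of \<open>B\<close> every element of \<open>Q\<close> therefore fixes
  \<open>w\<^sub>1\<close>. So \<open>T\<close> separates the orbits of \<open>a v\<^sub>1\<close>, the multiples \<open>b w\<^sub>1\<close> are fixed points, and for
  \<open>n \<ge> 2\<close> the vector \<open>v\<^sub>2 \<in> ker T\<close> lies in neither kind of orbit.

  Conversely, if \<open>T(v) = T(w)\<close> and \<open>B(v, w) \<noteq> 0\<close>, then \<open>u = w - v\<close> has \<open>T(u) = 0\<close> and a suitable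
  symplectic transvection along \<open>u\<close> maps \<open>v\<close> to \<open>w\<close>; it lifts to an automorphism of \<open>G\<close> fixing \<open>Z(G)\<close>
  because \<open>u\<close> has a lift of order \<open>p\<close>. If \<open>B(v, w) = 0\<close>, one passes through an intermediate vector
  \<open>k\<close> with \<open>T(k) = T(v)\<close> and \<open>B(v, k), B(w, k) \<noteq> 0\<close>, which exists unless \<open>v\<close> or \<open>w\<close> is a
  multiple of \<open>w\<^sub>1\<close>.\<close>

lemma (in comm_monoid) finprod_in_submonoid:
  assumes "submonoid S G" "f \<in> A \<rightarrow> S"
  shows "finprod G f A \<in> S"
proof (cases "finite A")
  case True
  interpret S: submonoid S G by (rule assms(1))
  from True assms(2) show ?thesis
  proof (induction A rule: finite_induct)
    case (insert a A)
    then have "f \<in> A \<rightarrow> carrier G" "f a \<in> carrier G" using S.subset by auto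
    with insert show ?case by simp
  qed simp
qed (simp add: finprod_def submonoid.one_closed[OF assms(1)])

lemma dvd_square_correction:
  fixes a b c k q h :: int
  assumes "2 * h = q + 1"
  shows "q dvd c * (a + b + q * k)^2 * h - c * a^2 * h - c * b^2 * h - c * a * b"
proof -
  have "c * (a + b + q * k)^2 * h - c * a^2 * h - c * b^2 * h - c * a * b
      = c * a * b * (2 * h - 1) + q * (c * h * (2 * (a + b) * k + q * k^2))"
    by (simp add: power2_eq_square algebra_simps)
  also have "\<dots> = q * (c * a * b + c * h * (2 * (a + b) * k + q * k^2))"
    using assms by (simp add: algebra_simps)
  finally show ?thesis by simp
qed

section \<open>The center and the quotient \<open>V = G/Z(G)\<close>\<close>

context group
begin

abbreviation Z :: "'a set" where "Z \<equiv> grp_center G"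

lemma inv_mult_cancel_left [simp]: "a \<in> carrier G \<Longrightarrow> b \<in> carrier G \<Longrightarrow> inv a \<otimes> (a \<otimes> b) = b"
  and mult_inv_cancel_left [simp]: "a \<in> carrier G \<Longrightarrow> b \<in> carrier G \<Longrightarrow> a \<otimes> (inv a \<otimes> b) = b"
  by (simp_all add: m_assoc[symmetric])

lemma grp_center_closed: "c \<in> Z \<Longrightarrow> c \<in> carrier G"
  by (simp add: grp_center_def)

lemma grp_center_commute: "c \<in> Z \<Longrightarrow> g \<in> carrier G \<Longrightarrow> c \<otimes> g = g \<otimes> c"
  by (simp add: grp_center_def)

lemma grp_center_left_commute:
  "c \<in> Z \<Longrightarrow> g \<in> carrier G \<Longrightarrow> h \<in> carrier G \<Longrightarrow> g \<otimes> (c \<otimes> h) = c \<otimes> (g \<otimes> h)"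
  by (metis grp_center_closed grp_center_commute m_assoc)

lemma grp_center_subgroup: "subgroup Z G"
proof (rule subgroupI)
  show "Z \<subseteq> carrier G" "Z \<noteq> {}"
    by (auto simp: grp_center_def)
  fix a b assume a: "a \<in> Z" and b: "b \<in> Z"
  show "inv a \<in> Z"
    unfolding grp_center_def
  proof (intro CollectI conjI ballI)
    fix g assume g: "g \<in> carrier G"
    have ac: "a \<in> carrier G" using a grp_center_closed by blast
    have "g \<otimes> inv a = inv a \<otimes> (a \<otimes> g) \<otimes> inv a"
      using ac g by (simp add: m_assoc[symmetric])
    also have "\<dots> = inv a \<otimes> (g \<otimes> a) \<otimes> inv a"
      using grp_center_commute[OF a g] by simp
    also have "\<dots> = inv a \<otimes> g"
      using ac g by (simp add: m_assoc)
    finally show "inv a \<otimes> g = g \<otimes> inv a" by simp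
  qed (use a grp_center_closed in simp)
  show "a \<otimes> b \<in> Z"
    unfolding grp_center_def
  proof (intro CollectI conjI ballI)
    fix g assume g: "g \<in> carrier G"
    have ab: "a \<in> carrier G" "b \<in> carrier G" using a b grp_center_closed by auto
    have "a \<otimes> b \<otimes> g = a \<otimes> g \<otimes> b"
      using ab g by (simp add: m_assoc grp_center_commute[OF b g])
    also have "\<dots> = g \<otimes> (a \<otimes> b)"
      using ab g by (simp add: m_assoc grp_center_commute[OF a g])
    finally show "a \<otimes> b \<otimes> g = g \<otimes> (a \<otimes> b)" .
  qed (use a b grp_center_closed in simp)
qed

lemma grp_center_int_pow_closed: "c \<in> Z \<Longrightarrow> c [^] (i::int) \<in> Z"
  by (rule subgroup_int_pow_closed[OF grp_center_subgroup])

lemma subgroup_nat_pow_closed: "subgroup H G \<Longrightarrow> h \<in> H \<Longrightarrow> h [^] (k::nat) \<in> H"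
  using subgroup_int_pow_closed[of H h "int k"] by (simp add: int_pow_int)

lemma grp_center_nat_pow_closed: "c \<in> Z \<Longrightarrow> c [^] (k::nat) \<in> Z"
  by (rule subgroup_nat_pow_closed[OF grp_center_subgroup])

lemma nat_pow_swap: "g \<in> carrier G \<Longrightarrow> (g [^] (a::nat)) [^] (b::nat) = (g [^] b) [^] a"
  by (simp add: nat_pow_pow mult.commute)

lemma grp_center_normal: "Z \<lhd> G"
proof (rule normalI[OF grp_center_subgroup], intro ballI)
  fix g assume g: "g \<in> carrier G"
  show "Z #> g = g <# Z"
    unfolding r_coset_def l_coset_def by (intro SUP_cong refl) (simp add: grp_center_commute[OF _ g])
qed

lemma rcos_grp_center_mult: "c \<in> Z \<Longrightarrow> g \<in> carrier G \<Longrightarrow> Z #> (c \<otimes> g) = Z #> g"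
  by (metis coset_mult_assoc coset_join2 grp_center_closed grp_center_subgroup subgroup.subset)

lemma rcos_grp_center_eq_iff:
  assumes "g \<in> carrier G" "h \<in> carrier G"
  shows "Z #> g = Z #> h \<longleftrightarrow> (\<exists>c \<in> Z. g = c \<otimes> h)"
proof
  assume "Z #> g = Z #> h"
  then show "\<exists>c \<in> Z. g = c \<otimes> h"
    using rcos_self[OF assms(1) grp_center_subgroup] by (auto simp: r_coset_def)
qed (use rcos_grp_center_mult assms in auto)

lemma rcos_grp_center_eq_iff_mult_inv:
  assumes "g \<in> carrier G" "h \<in> carrier G"
  shows "Z #> g = Z #> h \<longleftrightarrow> g \<otimes> inv h \<in> Z"
  unfolding rcos_grp_center_eq_iff[OF assms]
  using assms grp_center_closed by (auto simp: m_assoc intro!: bexI[of _ "g \<otimes> inv h"])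

lemma rcos_grp_center_subset: "g \<in> carrier G \<Longrightarrow> Z #> g \<subseteq> carrier G"
  by (simp add: r_coset_subset_G subgroup.subset[OF grp_center_subgroup])

lemma rcos_grp_center_eq_self_iff: "g \<in> carrier G \<Longrightarrow> Z #> g = Z \<longleftrightarrow> g \<in> Z"
  by (metis coset_join1 coset_join2 grp_center_subgroup)

lemma rcos_mult_grp_center [simp]:
  "g \<in> carrier G \<Longrightarrow> h \<in> carrier G \<Longrightarrow> (Z #> g) <#> (Z #> h) = Z #> (g \<otimes> h)"
  by (simp add: normal.rcos_sum[OF grp_center_normal])

lemma smult_V_rcos: "g \<in> carrier G \<Longrightarrow> smult_V G k (Z #> g) = Z #> (g [^] k)"
  by (simp add: smult_V_def normal.FactGroup_pow[OF grp_center_normal])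

lemma Vsp_carrier: "carrier (Vsp G) = {Z #> g | g. g \<in> carrier G}"
  by (auto simp: carrier_FactGroup)

lemma rcos_in_Vsp: "g \<in> carrier G \<Longrightarrow> Z #> g \<in> carrier (Vsp G)"
  by (auto simp: carrier_FactGroup)

lemma Vnz_eq: "Vnz G = {Z #> g | g. g \<in> carrier G \<and> g \<notin> Z}"
  unfolding Vnz_def Vsp_carrier using rcos_grp_center_eq_self_iff by auto

lemma rcos_in_Vnz: "g \<in> carrier G \<Longrightarrow> g \<notin> Z \<Longrightarrow> Z #> g \<in> Vnz G"
  unfolding Vnz_eq by blast

lemma submonoid_rcos_image:
  assumes H: "subgroup H G"
  shows "submonoid ((\<lambda>h. Z #> h) ` H) (Vsp G)"
proof
  note H_carrier = subgroup.mem_carrier[OF H]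
  show "(\<lambda>h. Z #> h) ` H \<subseteq> carrier (Vsp G)"
    using rcos_in_Vsp H_carrier by auto
  have one: "\<one>\<^bsub>Vsp G\<^esub> = Z #> \<one>"
    using coset_mult_one[OF subgroup.subset[OF grp_center_subgroup]] by (simp add: FactGroup_def)
  show "\<one>\<^bsub>Vsp G\<^esub> \<in> (\<lambda>h. Z #> h) ` H"
    unfolding one by (rule imageI[OF subgroup.one_closed[OF H]])
  show "a \<otimes>\<^bsub>Vsp G\<^esub> b \<in> (\<lambda>h. Z #> h) ` H" if ab: "a \<in> (\<lambda>h. Z #> h) ` H" "b \<in> (\<lambda>h. Z #> h) ` H" for a b
  proof -
    obtain h h' where h: "h \<in> H" "h' \<in> H" "a = Z #> h" "b = Z #> h'"
      using ab unfolding image_iff by blast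
    then have "a \<otimes>\<^bsub>Vsp G\<^esub> b = Z #> (h \<otimes> h')"
      by (simp add: H_carrier)
    moreover have "h \<otimes> h' \<in> H"
      using h(1,2) by (rule subgroup.m_closed[OF H])
    ultimately show ?thesis
      by (simp add: image_iff) blast
  qed
qed

section \<open>Automorphisms acting trivially on the center\<close>

lemma AutZ_hom: "\<phi> \<in> AutZ G \<Longrightarrow> \<phi> \<in> hom G G"
  by (simp add: AutZ_def iso_def)

lemma AutZ_fix: "\<phi> \<in> AutZ G \<Longrightarrow> c \<in> Z \<Longrightarrow> \<phi> c = c"
  by (simp add: AutZ_def)

lemma AutZ_closed: "\<phi> \<in> AutZ G \<Longrightarrow> g \<in> carrier G \<Longrightarrow> \<phi> g \<in> carrier G"
  by (rule hom_in_carrier[OF AutZ_hom])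

lemma AutZ_mult: "\<phi> \<in> AutZ G \<Longrightarrow> g \<in> carrier G \<Longrightarrow> h \<in> carrier G \<Longrightarrow> \<phi> (g \<otimes> h) = \<phi> g \<otimes> \<phi> h"
  by (simp add: AutZ_hom hom_mult)

lemma AutZ_nat_pow: "\<phi> \<in> AutZ G \<Longrightarrow> g \<in> carrier G \<Longrightarrow> \<phi> (g [^] (k::nat)) = \<phi> g [^] k"
  by (rule hom_nat_pow[OF AutZ_hom _ is_group is_group])

lemma AutZ_inv: "\<phi> \<in> AutZ G \<Longrightarrow> g \<in> carrier G \<Longrightarrow> \<phi> (inv g) = inv (\<phi> g)"
  by (simp add: group_hom.hom_inv group_hom_axioms_def group_hom_def AutZ_hom is_group)

lemma AutZ_grp_comm:
  "\<phi> \<in> AutZ G \<Longrightarrow> g \<in> carrier G \<Longrightarrow> h \<in> carrier G \<Longrightarrow> \<phi> (grp_comm G g h) = grp_comm G (\<phi> g) (\<phi> h)"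
  by (simp add: grp_comm_def AutZ_mult AutZ_inv AutZ_closed)

lemma AutZ_surj: "\<phi> \<in> AutZ G \<Longrightarrow> \<phi> ` carrier G = carrier G"
  by (simp add: AutZ_def iso_iff)

lemma AutZ_inv_into:
  assumes "\<phi> \<in> AutZ G"
  shows "inv_into (carrier G) \<phi> \<in> AutZ G"
proof -
  have iso: "\<phi> \<in> iso G G" using assms by (simp add: AutZ_def)
  then have "inj_on \<phi> (carrier G)" by (simp add: iso_iff)
  then have "inv_into (carrier G) \<phi> c = c" if "c \<in> Z" for c
    using that assms grp_center_closed by (metis AutZ_fix inv_into_f_f)
  then show ?thesis using iso_set_sym[OF iso] by (simp add: AutZ_def)
qed

lemma AutZ_id: "(\<lambda>g. g) \<in> AutZ G"
  by (simp add: AutZ_def iso_set_refl)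

lemma AutZ_comp: "\<phi> \<in> AutZ G \<Longrightarrow> \<psi> \<in> AutZ G \<Longrightarrow> \<psi> \<circ> \<phi> \<in> AutZ G"
  by (auto simp: AutZ_def iso_set_trans)

lemma f_map_rcos: "\<phi> \<in> AutZ G \<Longrightarrow> g \<in> carrier G \<Longrightarrow> f_map \<phi> (Z #> g) = Z #> \<phi> g"
  unfolding f_map_def r_coset_def image_UN
  by (intro SUP_cong refl) (simp add: AutZ_mult AutZ_fix grp_center_closed)

lemma mem_Q_orbit_iff: "w \<in> Q_orbit G v \<longleftrightarrow> (\<exists>\<phi> \<in> AutZ G. \<phi> ` v = w)"
proof
  assume "\<exists>\<phi> \<in> AutZ G. \<phi> ` v = w"
  then obtain \<phi> where "\<phi> \<in> AutZ G" "\<phi> ` v = w" by blast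
  then show "w \<in> Q_orbit G v"
    unfolding Q_orbit_def Qgrp_def by (intro CollectI exI[of _ "f_map \<phi>"]) (auto simp: f_map_def)
qed (force simp: Q_orbit_def Qgrp_def f_map_def)

lemma Q_orbit_self: "v \<in> Q_orbit G v"
  unfolding mem_Q_orbit_iff using AutZ_id by (intro bexI[of _ "\<lambda>g. g"]) auto

lemma Q_orbit_trans:
  assumes "w \<in> Q_orbit G v" "u \<in> Q_orbit G w"
  shows "u \<in> Q_orbit G v"
proof -
  obtain \<phi> \<psi> where "\<phi> \<in> AutZ G" "\<phi> ` v = w" "\<psi> \<in> AutZ G" "\<psi> ` w = u"
    using assms unfolding mem_Q_orbit_iff by blast
  then show ?thesis
    unfolding mem_Q_orbit_iff by (intro bexI[of _ "\<psi> \<circ> \<phi>"]) (auto simp: image_comp AutZ_comp)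
qed

lemma Q_orbit_sym:
  assumes "v \<subseteq> carrier G" "w \<in> Q_orbit G v"
  shows "v \<in> Q_orbit G w"
proof -
  obtain \<phi> where \<phi>: "\<phi> \<in> AutZ G" "\<phi> ` v = w"
    using assms(2) unfolding mem_Q_orbit_iff by blast
  have "inj_on \<phi> (carrier G)"
    using \<phi>(1) by (simp add: AutZ_def iso_iff)
  then have "inv_into (carrier G) \<phi> ` w = v"
    using \<phi>(2) assms(1) by (metis inv_into_image_cancel)
  then show ?thesis
    unfolding mem_Q_orbit_iff using AutZ_inv_into[OF \<phi>(1)] by blast
qed

lemma Q_orbit_eq:
  assumes "v \<subseteq> carrier G" "w \<in> Q_orbit G v"
  shows "Q_orbit G w = Q_orbit G v"
  using Q_orbit_trans Q_orbit_sym[OF assms] assms(2) by blast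

lemma Q_orbit_eq_imp_mem: "Q_orbit G v = Q_orbit G w \<Longrightarrow> w \<in> Q_orbit G v"
  using Q_orbit_self by blast

end

section \<open>Groups with central commutators\<close>

locale class_two_group = group G for G (structure) +
  assumes grp_comm_in_center: "g \<in> carrier G \<Longrightarrow> h \<in> carrier G \<Longrightarrow> grp_comm G g h \<in> Z"
begin

abbreviation comm :: "'a \<Rightarrow> 'a \<Rightarrow> 'a" where "comm g h \<equiv> grp_comm G g h"

lemma comm_closed [simp]: "g \<in> carrier G \<Longrightarrow> h \<in> carrier G \<Longrightarrow> comm g h \<in> carrier G"
  by (simp add: grp_comm_def)

lemma mult_eq_comm_mult: "g \<in> carrier G \<Longrightarrow> h \<in> carrier G \<Longrightarrow> g \<otimes> h = comm g h \<otimes> (h \<otimes> g)"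
  by (simp add: grp_comm_def m_assoc)

lemma comm_swap: "g \<in> carrier G \<Longrightarrow> h \<in> carrier G \<Longrightarrow> comm h g = inv (comm g h)"
  by (simp add: grp_comm_def inv_mult_group m_assoc)

lemma comm_one_left [simp]: "g \<in> carrier G \<Longrightarrow> comm \<one> g = \<one>"
  and comm_one_right [simp]: "g \<in> carrier G \<Longrightarrow> comm g \<one> = \<one>"
  by (simp_all add: grp_comm_def)

lemma comm_self [simp]: "g \<in> carrier G \<Longrightarrow> comm g g = \<one>"
  by (simp add: grp_comm_def m_assoc)

lemma comm_center_left:
  assumes "c \<in> Z" "g \<in> carrier G"
  shows "comm c g = \<one>"
  using assms grp_center_closed by (simp add: grp_comm_def grp_center_commute[OF assms] m_assoc)

lemma comm_center_right: "c \<in> Z \<Longrightarrow> g \<in> carrier G \<Longrightarrow> comm g c = \<one>"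
  using comm_swap[of c g] comm_center_left[of c g] grp_center_closed by simp

lemma comm_mult_left:
  assumes g: "g \<in> carrier G" and h: "h \<in> carrier G" and u: "u \<in> carrier G"
  shows "comm (g \<otimes> h) u = comm g u \<otimes> comm h u"
proof -
  have conj: "h \<otimes> (u \<otimes> inv h) = comm h u \<otimes> u"
    using assms by (simp add: grp_comm_def m_assoc)
  have "comm (g \<otimes> h) u = g \<otimes> (h \<otimes> (u \<otimes> inv h)) \<otimes> inv g \<otimes> inv u"
    using assms by (simp add: grp_comm_def inv_mult_group m_assoc)
  also have "\<dots> = g \<otimes> (comm h u \<otimes> (u \<otimes> (inv g \<otimes> inv u)))"
    using assms by (simp add: conj m_assoc)
  also have "\<dots> = comm h u \<otimes> (g \<otimes> (u \<otimes> (inv g \<otimes> inv u)))"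
    using assms by (intro grp_center_left_commute grp_comm_in_center) auto
  also have "\<dots> = comm h u \<otimes> comm g u"
    using assms by (simp add: grp_comm_def m_assoc)
  also have "\<dots> = comm g u \<otimes> comm h u"
    using assms by (simp add: grp_center_commute grp_comm_in_center)
  finally show ?thesis .
qed

lemma comm_mult_right:
  assumes "g \<in> carrier G" "h \<in> carrier G" "u \<in> carrier G"
  shows "comm u (g \<otimes> h) = comm u g \<otimes> comm u h"
proof -
  have "comm u (g \<otimes> h) = inv (comm (g \<otimes> h) u)"
    using assms comm_swap[of "g \<otimes> h" u] by simp
  also have "\<dots> = inv (comm h u) \<otimes> inv (comm g u)"
    using assms by (simp add: comm_mult_left inv_mult_group)
  also have "\<dots> = comm u h \<otimes> comm u g"
    using assms by (simp add: comm_swap[of h u] comm_swap[of g u])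
  also have "\<dots> = comm u g \<otimes> comm u h"
    using assms by (simp add: grp_center_commute grp_comm_in_center)
  finally show ?thesis .
qed

lemma comm_inv_left:
  assumes "g \<in> carrier G" "u \<in> carrier G"
  shows "comm (inv g) u = inv (comm g u)"
proof -
  have "comm (inv g) u \<otimes> comm g u = \<one>"
    using assms comm_mult_left[of "inv g" g u] by simp
  then show ?thesis using assms by (simp add: inv_equality)
qed

lemma comm_inv_right: "g \<in> carrier G \<Longrightarrow> u \<in> carrier G \<Longrightarrow> comm u (inv g) = inv (comm u g)"
  using comm_swap[of "inv g" u] comm_swap[of g u] by (simp add: comm_inv_left)

lemma comm_nat_pow_left: "g \<in> carrier G \<Longrightarrow> u \<in> carrier G \<Longrightarrow> comm (g [^] (k::nat)) u = comm g u [^] k"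
  by (induction k) (simp_all add: comm_mult_left)

lemma comm_nat_pow_right: "g \<in> carrier G \<Longrightarrow> u \<in> carrier G \<Longrightarrow> comm u (g [^] (k::nat)) = comm u g [^] k"
  by (induction k) (simp_all add: comm_mult_right)

lemma comm_int_pow_left:
  assumes "g \<in> carrier G" "u \<in> carrier G"
  shows "comm (g [^] (i::int)) u = comm g u [^] i"
proof (cases "i \<ge> 0")
  case True
  then obtain k where "i = int k" by (metis nonneg_int_cases)
  then show ?thesis using assms by (simp add: int_pow_int comm_nat_pow_left)
next
  case False
  then have "i = - int (nat (- i))" by simp
  then obtain k where "i = - int k" by blast
  then show ?thesis using assms by (simp add: int_pow_neg int_pow_int comm_inv_left comm_nat_pow_left)
qed

lemma comm_group_Vsp: "comm_group (Vsp G)"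
proof (rule group.group_comm_groupI[OF normal.factorgroup_is_group[OF grp_center_normal]])
  fix a b assume "a \<in> carrier (Vsp G)" "b \<in> carrier (Vsp G)"
  then obtain g h where gh: "g \<in> carrier G" "h \<in> carrier G" "a = Z #> g" "b = Z #> h"
    by (auto simp: Vsp_carrier)
  then have "Z #> (g \<otimes> h) = Z #> (h \<otimes> g)"
    by (simp add: mult_eq_comm_mult[of g h] rcos_grp_center_mult grp_comm_in_center)
  then show "a \<otimes>\<^bsub>Vsp G\<^esub> b = b \<otimes>\<^bsub>Vsp G\<^esub> a"
    using gh by simp
qed

lemma triangular_Suc: "Suc k * (Suc k - 1) div 2 = k * (k - 1) div 2 + k"
  by (cases k) auto

lemma nat_pow_mult_comm:
  assumes g: "g \<in> carrier G" and h: "h \<in> carrier G"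
  shows "(g \<otimes> h) [^] (k::nat) = g [^] k \<otimes> (h [^] k \<otimes> comm h g [^] (k * (k - 1) div 2))"
proof (induction k)
  case 0
  then show ?case by simp
next
  case (Suc k)
  define c where "c = comm h g"
  define t where "t = k * (k - 1) div 2"
  have cZ: "c [^] (m::nat) \<in> Z" for m
    unfolding c_def using g h by (simp add: grp_comm_in_center grp_center_nat_pow_closed)
  have cc: "c \<in> carrier G" "c [^] (m::nat) \<in> carrier G" for m
    using cZ grp_center_closed g h unfolding c_def by auto
  have gk: "g [^] k \<in> carrier G" "h [^] k \<in> carrier G" using g h by auto
  have swap: "h [^] k \<otimes> g = c [^] k \<otimes> (g \<otimes> h [^] k)"
    using mult_eq_comm_mult[of "h [^] k" g] comm_nat_pow_left[OF h g] g h by (simp add: c_def)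
  have "(g \<otimes> h) [^] Suc k = g [^] k \<otimes> (h [^] k \<otimes> c [^] t) \<otimes> (g \<otimes> h)"
    using Suc by (simp add: c_def t_def)
  also have "\<dots> = g [^] k \<otimes> ((h [^] k \<otimes> g) \<otimes> (h \<otimes> c [^] t))"
    using g h gk cc grp_center_commute[OF cZ[of t], of "g \<otimes> h"] by (simp add: m_assoc)
  also have "\<dots> = c [^] k \<otimes> (g [^] k \<otimes> ((g \<otimes> h [^] k) \<otimes> (h \<otimes> c [^] t)))"
    unfolding swap using g h gk cc by (simp add: m_assoc grp_center_left_commute[OF cZ[of k]])
  also have "\<dots> = (g [^] k \<otimes> g) \<otimes> ((h [^] k \<otimes> h) \<otimes> (c [^] t \<otimes> c [^] k))"
    using g h gk cc grp_center_commute[OF cZ[of k]] by (simp add: m_assoc)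
  also have "\<dots> = g [^] Suc k \<otimes> (h [^] Suc k \<otimes> c [^] (t + k))"
    using cc by (simp add: nat_pow_mult)
  finally show ?case by (simp only: triangular_Suc c_def t_def)
qed

lemma nat_pow_mult_distrib_odd:
  fixes p :: nat
  assumes "g \<in> carrier G" "h \<in> carrier G" "odd p" "comm h g [^] p = \<one>"
  shows "(g \<otimes> h) [^] p = g [^] p \<otimes> h [^] p"
proof -
  have "p * (p - 1) div 2 = p * ((p - 1) div 2)"
    using \<open>odd p\<close> by (simp add: div_mult_swap)
  then have "comm h g [^] (p * (p - 1) div 2) = \<one>"
    using assms by (simp add: nat_pow_pow[symmetric])
  then show ?thesis using nat_pow_mult_comm[OF assms(1,2), of p] assms(1,2) by simp
qed

end

section \<open>Extraspecial groups with a special symplectic basis\<close>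

text \<open>\<open>x i\<close> and \<open>y i\<close> lift the basis vectors \<open>v\<^bsub>i+1\<^esub>\<close> and \<open>w\<^bsub>i+1\<^esub>\<close>, so the paper's \<open>v\<^sub>2\<close> is
  \<open>x 1\<close>; \<open>z\<close> is the element of \<open>Z(G)\<close> identified with \<open>1 \<in> GF(p)\<close>.\<close>

locale extraspecial_basis = class_two_group G for G (structure) +
  fixes p :: nat and z :: 'a and n :: nat and x y :: "nat \<Rightarrow> 'a"
  assumes prime_p: "Factorial_Ring.prime p" and odd_p: "odd p"
    and grp_center_pow_p: "c \<in> Z \<Longrightarrow> c [^] p = \<one>"
    and card_grp_center: "card Z = p"
    and z_in_center: "z \<in> Z" and z_ne_one: "z \<noteq> \<one>"
    and basis: "special_symplectic_basis p G z n x y"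
begin

lemma one_less_p: "1 < p"
  using prime_p prime_gt_1_nat by blast

lemma z_closed [simp]: "z \<in> carrier G"
  using z_in_center grp_center_closed by blast

lemma ord_z: "ord z = p"
proof -
  have "ord z dvd p" using grp_center_pow_p[OF z_in_center] pow_eq_id[of z] by simp
  moreover have "ord z \<noteq> 1" using ord_eq_1[of z] z_ne_one by simp
  ultimately show ?thesis using prime_p prime_nat_iff by blast
qed

lemma z_pow_inj: "a < p \<Longrightarrow> b < p \<Longrightarrow> z [^] a = z [^] b \<Longrightarrow> a = b"
  using ord_inj[of z] ord_z one_less_p by (auto simp: inj_on_def atLeastAtMost_iff)

lemma z_pow_eq_one_iff: "a < p \<Longrightarrow> z [^] a = \<one> \<longleftrightarrow> a = 0"
  using z_pow_inj[of a 0] one_less_p by auto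

lemma z_int_pow_eq_iff: "z [^] (i::int) = z [^] (j::int) \<longleftrightarrow> int p dvd (j - i)"
  using int_pow_eq[of z i j] ord_z by simp

lemma grp_center_eq_z_powers: "Z = (\<lambda>k. z [^] k) ` {..<p}"
proof -
  have "inj_on (\<lambda>k. z [^] k) {..<p}"
    using z_pow_inj by (auto simp: inj_on_def)
  then have "card ((\<lambda>k. z [^] k) ` {..<p}) = card Z"
    by (simp add: card_image card_grp_center)
  moreover have "(\<lambda>k. z [^] k) ` {..<p} \<subseteq> Z"
    using grp_center_nat_pow_closed[OF z_in_center] by auto
  moreover have "finite Z"
    using card_grp_center one_less_p card.infinite by fastforce
  ultimately show ?thesis using card_subset_eq by metis
qed

definition z_log :: "'a \<Rightarrow> nat" where
  "z_log c = (SOME k. k < p \<and> z [^] k = c)"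

lemma z_log: assumes "c \<in> Z" shows "z_log c < p" "z [^] z_log c = c"
proof -
  have "\<exists>k. k < p \<and> z [^] k = c" using assms grp_center_eq_z_powers by auto
  then have "z_log c < p \<and> z [^] z_log c = c" unfolding z_log_def by (rule someI_ex)
  then show "z_log c < p" "z [^] z_log c = c" by auto
qed

lemma int_pow_cong_p:
  assumes "u \<in> carrier G" "u [^] p = \<one>" "int p dvd (j - i)"
  shows "u [^] (i::int) = u [^] j"
proof -
  have "int (ord u) dvd int p" using assms pow_eq_id by simp
  then have "int (ord u) dvd (j - i)" using assms(3) by (rule dvd_trans)
  then show ?thesis using int_pow_eq[OF assms(1)] by blast
qed

lemma basis_n_pos: "0 < n"
  and x_closed: "i < n \<Longrightarrow> x i \<in> carrier G"
  and y_closed: "i < n \<Longrightarrow> y i \<in> carrier G"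
  and comm_x_y_same: "i < n \<Longrightarrow> comm (x i) (y i) = z"
  and comm_x_y: "i < n \<Longrightarrow> j < n \<Longrightarrow> i \<noteq> j \<Longrightarrow> comm (x i) (y j) = \<one>"
  and comm_y_y: "i < n \<Longrightarrow> j < n \<Longrightarrow> i \<noteq> j \<Longrightarrow> comm (y i) (y j) = \<one>"
  and x0_pow_p: "x 0 [^] p = z"
  and x_pow_p: "i < n \<Longrightarrow> 0 < i \<Longrightarrow> x i [^] p = \<one>"
  and y_pow_p: "i < n \<Longrightarrow> y i [^] p = \<one>"
  and basis_bij: "bij_betw (\<lambda>(a, b). finprod (Vsp G)
                (\<lambda>i. smult_V G (a i) (Z #> x i) \<otimes>\<^bsub>Vsp G\<^esub> smult_V G (b i) (Z #> y i)) {..<n})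
       (({..<n} \<rightarrow>\<^sub>E {..<p}) \<times> ({..<n} \<rightarrow>\<^sub>E {..<p})) (carrier (Vsp G))"
  using basis by (simp_all add: special_symplectic_basis_def)

lemma x0_closed [simp]: "x 0 \<in> carrier G"
  and y0_closed [simp]: "y 0 \<in> carrier G"
  using x_closed y_closed basis_n_pos by auto

lemma y0_pow_p: "y 0 [^] p = \<one>"
  using y_pow_p basis_n_pos by blast

lemma order_eq: "order G = p ^ (2 * n + 1)"
proof -
  have "order G = card (carrier (Vsp G)) * card Z"
    using lagrange[OF grp_center_subgroup] by (simp add: FactGroup_def)
  also have "card (carrier (Vsp G)) = p ^ n * p ^ n"
    using bij_betw_same_card[OF basis_bij] by (simp add: card_cartesian_product card_PiE)
  finally show ?thesis by (simp add: card_grp_center power_add mult_2 power_Suc2)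
qed

lemma mem_subgroup_if_basis:
  assumes H: "subgroup H G" "Z \<subseteq> H" "\<And>i. i < n \<Longrightarrow> x i \<in> H" "\<And>i. i < n \<Longrightarrow> y i \<in> H"
    and g: "g \<in> carrier G"
  shows "g \<in> H"
proof -
  note H_carrier = subgroup.mem_carrier[OF H(1)]
  define S where "S = (\<lambda>h. Z #> h) ` H"
  define F where "F = (\<lambda>(a, b). finprod (Vsp G)
    (\<lambda>i. smult_V G (a i) (Z #> x i) \<otimes>\<^bsub>Vsp G\<^esub> smult_V G (b i) (Z #> y i)) {..<n})"
  obtain ab where ab: "Z #> g = F ab"
    using rcos_in_Vsp[OF g] bij_betw_imp_surj_on[OF basis_bij[folded F_def]] by (metis imageE)
  have "F ab \<in> S"
  proof (cases ab)
    case (Pair a b)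
    have "smult_V G (a i) (Z #> x i) \<otimes>\<^bsub>Vsp G\<^esub> smult_V G (b i) (Z #> y i)
        = Z #> (x i [^] a i \<otimes> y i [^] b i)" if "i < n" for i
      using that x_closed y_closed by (simp add: smult_V_rcos)
    moreover have "x i [^] a i \<otimes> y i [^] b i \<in> H" if "i < n" for i
      using that H by (simp add: subgroup.m_closed subgroup_nat_pow_closed)
    ultimately have "(\<lambda>i. smult_V G (a i) (Z #> x i) \<otimes>\<^bsub>Vsp G\<^esub> smult_V G (b i) (Z #> y i))
        \<in> {..<n} \<rightarrow> S"
      unfolding S_def by auto
    moreover have "comm_monoid (Vsp G)"
      using comm_group_Vsp comm_group_def by blast
    ultimately show ?thesis
      unfolding Pair F_def split
      using comm_monoid.finprod_in_submonoid submonoid_rcos_image[OF H(1), folded S_def] by blast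
  qed
  then obtain h where h: "h \<in> H" "Z #> g = Z #> h"
    unfolding ab[symmetric] S_def by blast
  then obtain c where "c \<in> Z" "g = c \<otimes> h"
    using g H_carrier rcos_grp_center_eq_iff by blast
  then show ?thesis using H(2) h(1) subgroup.m_closed[OF H(1)] by blast
qed

lemma grp_center_if_comm_basis:
  assumes g: "g \<in> carrier G"
    and "\<And>i. i < n \<Longrightarrow> comm g (x i) = \<one>" "\<And>i. i < n \<Longrightarrow> comm g (y i) = \<one>"
  shows "g \<in> Z"
proof -
  define H where "H = {h \<in> carrier G. comm g h = \<one>}"
  have sub: "subgroup H G"
  proof (rule subgroupI)
    show "H \<subseteq> carrier G" "H \<noteq> {}" using g by (auto simp: H_def intro!: exI[of _ \<one>])
    show "inv a \<in> H" if "a \<in> H" for a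
      using that g by (simp add: H_def comm_inv_right)
    show "a \<otimes> b \<in> H" if "a \<in> H" "b \<in> H" for a b
      using that g by (simp add: H_def comm_mult_right)
  qed
  have ZH: "Z \<subseteq> H"
    using g comm_center_right grp_center_closed by (auto simp: H_def)
  have "carrier G \<subseteq> H"
  proof
    fix h assume h: "h \<in> carrier G"
    show "h \<in> H"
      by (rule mem_subgroup_if_basis[OF sub ZH _ _ h]) (auto simp: H_def assms x_closed y_closed)
  qed
  then have "g \<otimes> h = h \<otimes> g" if "h \<in> carrier G" for h
    using that g mult_eq_comm_mult[OF g that] by (auto simp: H_def)
  then show ?thesis using g by (simp add: grp_center_def)
qed

text \<open>The \<open>p\<close>-th power map is the form \<open>B(-, w\<^sub>1)\<close>: both sides are homomorphisms
  \<open>G \<rightarrow> Z\<close> agreeing on the basis.\<close>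

lemma pow_p_eq_comm_y0:
  assumes "g \<in> carrier G"
  shows "g [^] p = comm g (y 0)"
proof -
  define E where "E = {g \<in> carrier G. g [^] p = comm g (y 0)}"
  have "subgroup E G"
  proof (rule subgroupI)
    show "E \<subseteq> carrier G" "E \<noteq> {}" by (auto simp: E_def intro!: exI[of _ \<one>])
    show "inv a \<in> E" if "a \<in> E" for a
      using that by (simp add: E_def nat_pow_inv comm_inv_left)
    show "a \<otimes> b \<in> E" if "a \<in> E" "b \<in> E" for a b
      using that odd_p
      by (simp add: E_def nat_pow_mult_distrib_odd grp_center_pow_p grp_comm_in_center comm_mult_left)
  qed
  moreover have "Z \<subseteq> E"
    using grp_center_pow_p comm_center_left grp_center_closed by (auto simp: E_def)
  moreover have "x i \<in> E" if "i < n" for i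
    using that x_closed[OF that] basis_n_pos
    by (cases "i = 0") (auto simp: E_def x0_pow_p comm_x_y_same x_pow_p comm_x_y)
  moreover have "y i \<in> E" if "i < n" for i
    using that y_closed[OF that] basis_n_pos
    by (cases "i = 0") (auto simp: E_def y_pow_p comm_y_y)
  ultimately show ?thesis
    using mem_subgroup_if_basis assms unfolding E_def by blast
qed

lemma pow_p_in_center: "g \<in> carrier G \<Longrightarrow> g [^] p \<in> Z"
  by (simp add: pow_p_eq_comm_y0 grp_comm_in_center)

lemma Tmap_rcos:
  assumes g: "g \<in> carrier G"
  shows "Tmap p G (Z #> g) = g [^] p"
proof -
  have "(SOME g'. g' \<in> Z #> g) \<in> Z #> g"
    using rcos_self[OF g grp_center_subgroup] by (rule someI)
  then obtain c where c: "c \<in> Z" "(SOME g'. g' \<in> Z #> g) = c \<otimes> g"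
    by (auto simp: r_coset_def)
  have "(c \<otimes> g) [^] p = c [^] p \<otimes> g [^] p"
    by (rule pow_mult_distrib) (use c g grp_center_closed grp_center_commute in auto)
  then show ?thesis
    using c g grp_center_pow_p grp_center_closed by (simp add: Tmap_def)
qed

lemma AutZ_pow_p:
  assumes "\<phi> \<in> AutZ G" "g \<in> carrier G"
  shows "\<phi> g [^] p = g [^] p"
  using AutZ_nat_pow[OF assms, of p] AutZ_fix[OF assms(1) pow_p_in_center[OF assms(2)]] by simp

lemma Tmap_f_map: "\<phi> \<in> AutZ G \<Longrightarrow> g \<in> carrier G \<Longrightarrow> Tmap p G (f_map \<phi> (Z #> g)) = Tmap p G (Z #> g)"
  by (simp add: f_map_rcos Tmap_rcos AutZ_closed AutZ_pow_p)

text \<open>Automorphisms preserve both the commutator form and the \<open>p\<close>-th power map, hence fix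
  \<open>w\<^sub>1\<close>, which represents the latter; nondegeneracy makes this representative unique.\<close>

lemma AutZ_fixes_rcos_y0:
  assumes \<phi>: "\<phi> \<in> AutZ G"
  shows "Z #> \<phi> (y 0) = Z #> y 0"
proof -
  have \<phi>y: "\<phi> (y 0) \<in> carrier G" using AutZ_closed[OF \<phi>] by simp
  define d where "d = \<phi> (y 0) \<otimes> inv (y 0)"
  have d: "d \<in> carrier G" using \<phi>y by (simp add: d_def)
  have "comm h d = \<one>" if h: "h \<in> carrier G" for h
  proof -
    obtain k where k: "k \<in> carrier G" "h = \<phi> k"
      using h AutZ_surj[OF \<phi>] by blast
    have "comm h (\<phi> (y 0)) = \<phi> (k [^] p)"
      using k by (simp add: AutZ_grp_comm[OF \<phi>] pow_p_eq_comm_y0)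
    also have "\<dots> = \<phi> k [^] p"
      using k \<phi> by (simp add: AutZ_fix pow_p_in_center AutZ_pow_p)
    also have "\<dots> = comm h (y 0)"
      using k \<phi> by (simp add: pow_p_eq_comm_y0 AutZ_closed)
    finally show ?thesis
      using h \<phi>y by (simp add: d_def comm_mult_right comm_inv_right)
  qed
  then have "comm d h = \<one>" if "h \<in> carrier G" for h
    using that d comm_swap[of h d] by simp
  then have "d \<in> Z"
    using d by (intro grp_center_if_comm_basis) (auto simp: x_closed y_closed)
  then show ?thesis using rcos_grp_center_eq_iff_mult_inv[OF \<phi>y] d_def by simp
qed

lemma f_map_smult_y0:
  assumes "\<phi> \<in> AutZ G"
  shows "f_map \<phi> (smult_V G k (Z #> y 0)) = smult_V G k (Z #> y 0)"
proof -
  have "f_map \<phi> (smult_V G k (Z #> y 0)) = smult_V G k (Z #> \<phi> (y 0))"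
    using assms by (simp add: smult_V_rcos f_map_rcos AutZ_nat_pow AutZ_closed)
  then show ?thesis
    by (simp add: AutZ_fixes_rcos_y0[OF assms])
qed

subsection \<open>Transvections\<close>

definition half :: int where
  "half = int ((p + 1) div 2)"

lemma two_half: "2 * half = int p + 1"
  using odd_p by (simp add: half_def) (metis odd_two_times_div_two_succ of_nat_add of_nat_mult of_nat_numeral of_nat_1 add.commute)

definition comm_log :: "'a \<Rightarrow> 'a \<Rightarrow> int" where
  "comm_log u g = int (z_log (comm g u))"

lemma z_pow_comm_log: "g \<in> carrier G \<Longrightarrow> u \<in> carrier G \<Longrightarrow> z [^] comm_log u g = comm g u"
  using z_log[OF grp_comm_in_center] by (simp add: comm_log_def int_pow_int)

lemma z_log_one: "z_log \<one> = 0"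
  using z_log[OF subgroup.one_closed[OF grp_center_subgroup]] z_pow_eq_one_iff by blast

lemma comm_log_center: "c \<in> Z \<Longrightarrow> u \<in> carrier G \<Longrightarrow> comm_log u c = 0"
  by (simp add: comm_log_def comm_center_left z_log_one)

lemma comm_log_mult:
  assumes "g \<in> carrier G" "h \<in> carrier G" "u \<in> carrier G"
  obtains k where "comm_log u (g \<otimes> h) = comm_log u g + comm_log u h + int p * k"
proof -
  have "z [^] comm_log u (g \<otimes> h) = z [^] (comm_log u g + comm_log u h)"
    using assms by (simp add: z_pow_comm_log comm_mult_left int_pow_mult)
  then have "int p dvd comm_log u (g \<otimes> h) - (comm_log u g + comm_log u h)"
    unfolding z_int_pow_eq_iff by (simp add: dvd_diff_commute)
  then show thesis using that by (metis add_diff_cancel_left' diff_add_cancel dvdE add.commute)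
qed

text \<open>The lift to \<open>G\<close> of the transvection \<open>v \<mapsto> v + c B(v, u) u\<close> of \<open>V\<close>, where \<open>u\<^sup>p = 1\<close>. The
  central correction \<open>z\<^bsup>-c m\<^sup>2/2\<^esup>\<close> (with \<open>1/2 = half\<close> modulo \<open>p\<close>) is what makes it multiplicative.\<close>

definition transvection :: "'a \<Rightarrow> int \<Rightarrow> 'a \<Rightarrow> 'a" where
  "transvection u c g = g \<otimes> u [^] (c * comm_log u g) \<otimes> z [^] (- (c * (comm_log u g)^2 * half))"

lemma transvection_closed: "u \<in> carrier G \<Longrightarrow> g \<in> carrier G \<Longrightarrow> transvection u c g \<in> carrier G"
  by (simp add: transvection_def)

lemma mult_rearrange_center:
  assumes "g \<in> carrier G" "h \<in> carrier G" "a \<in> carrier G" "b \<in> carrier G"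
    and "k \<in> Z" "c \<in> Z" "d \<in> Z" and "a \<otimes> h = k \<otimes> (h \<otimes> a)"
  shows "(g \<otimes> a \<otimes> c) \<otimes> (h \<otimes> b \<otimes> d) = (g \<otimes> h) \<otimes> (a \<otimes> b) \<otimes> (k \<otimes> c \<otimes> d)"
proof -
  have Zc: "k \<in> carrier G" "c \<in> carrier G" "d \<in> carrier G"
    using assms(5-7) grp_center_closed by auto
  have "(g \<otimes> a \<otimes> c) \<otimes> (h \<otimes> b \<otimes> d) = g \<otimes> ((a \<otimes> h) \<otimes> (b \<otimes> (d \<otimes> c)))"
    using assms(1-4) Zc grp_center_commute[OF assms(6), of "h \<otimes> (b \<otimes> d)"] by (simp add: m_assoc)
  also have "\<dots> = k \<otimes> (g \<otimes> (h \<otimes> (a \<otimes> (b \<otimes> (d \<otimes> c)))))"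
    unfolding assms(8) using assms(1-4) Zc
    by (simp add: m_assoc grp_center_left_commute[OF assms(5), of g])
  also have "\<dots> = g \<otimes> (h \<otimes> (a \<otimes> (b \<otimes> (d \<otimes> c \<otimes> k))))"
    using assms(1-4) Zc grp_center_commute[OF assms(5), of "g \<otimes> (h \<otimes> (a \<otimes> (b \<otimes> (d \<otimes> c))))"]
    by (simp add: m_assoc)
  also have "d \<otimes> c \<otimes> k = k \<otimes> c \<otimes> d"
    using Zc grp_center_commute[OF assms(5), of "c \<otimes> d"] grp_center_commute[OF assms(6), of d]
    by (simp add: m_assoc)
  finally show ?thesis
    using assms(1-4) Zc by (simp add: m_assoc)
qed

lemma transvection_mult:
  assumes u: "u \<in> carrier G" "u [^] p = \<one>" and g: "g \<in> carrier G" and h: "h \<in> carrier G"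
  shows "transvection u c (g \<otimes> h) = transvection u c g \<otimes> transvection u c h"
proof -
  define a b where "a = comm_log u g" and "b = comm_log u h"
  obtain k where k: "comm_log u (g \<otimes> h) = a + b + int p * k"
    using comm_log_mult[OF g h u(1)] unfolding a_def b_def .
  define K where "K = z [^] (- (b * (c * a)))"
  have "comm (u [^] (c * a)) h = comm u h [^] (c * a)"
    using u h by (simp add: comm_int_pow_left)
  also have "comm u h = inv (z [^] b)"
    using comm_swap[OF h u(1)] z_pow_comm_log[OF h u(1)] by (simp add: b_def)
  also have "inv (z [^] b) [^] (c * a) = K"
    by (simp add: K_def int_pow_inv int_pow_pow int_pow_neg)
  finally have swap: "u [^] (c * a) \<otimes> h = K \<otimes> (h \<otimes> u [^] (c * a))"
    using mult_eq_comm_mult[of "u [^] (c * a)" h] u h by simp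
  have "transvection u c g \<otimes> transvection u c h
      = (g \<otimes> h) \<otimes> (u [^] (c * a) \<otimes> u [^] (c * b))
          \<otimes> (K \<otimes> z [^] (- (c * a^2 * half)) \<otimes> z [^] (- (c * b^2 * half)))"
    unfolding transvection_def a_def[symmetric] b_def[symmetric]
    by (rule mult_rearrange_center[OF g h _ _ _ _ _ swap])
      (use u z_in_center in \<open>auto simp: K_def grp_center_int_pow_closed\<close>)
  also have "u [^] (c * a) \<otimes> u [^] (c * b) = u [^] (c * comm_log u (g \<otimes> h))"
    using u by (simp add: int_pow_mult[symmetric] k distrib_left)
      (rule int_pow_cong_p[OF u], simp add: algebra_simps)
  also have "K \<otimes> z [^] (- (c * a^2 * half)) \<otimes> z [^] (- (c * b^2 * half))
      = z [^] (- (c * (comm_log u (g \<otimes> h))^2 * half))"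
    unfolding K_def k z_int_pow_eq_iff[symmetric] int_pow_mult[OF z_closed, symmetric]
    using dvd_minus_iff[THEN iffD2, OF dvd_square_correction[OF two_half, of c a b k]]
    by (simp add: z_int_pow_eq_iff algebra_simps)
  finally show ?thesis
    by (simp add: transvection_def)
qed

lemma comm_log_transvection:
  "u \<in> carrier G \<Longrightarrow> g \<in> carrier G \<Longrightarrow> comm_log u (transvection u c g) = comm_log u g"
  by (simp add: transvection_def comm_log_def comm_mult_left comm_int_pow_left
      comm_center_left[OF z_in_center])

lemma transvection_inverse:
  assumes u: "u \<in> carrier G" "u [^] p = \<one>" and g: "g \<in> carrier G"
  shows "transvection u (- c) (transvection u c g) = g"
proof -
  define m e where "m = comm_log u g" and "e = c * m^2 * half"
  have "z [^] (- e) \<otimes> (u [^] (- (c * m)) \<otimes> z [^] e) = u [^] (- (c * m)) \<otimes> (z [^] (- e) \<otimes> z [^] e)"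
    using u by (simp add: grp_center_left_commute grp_center_int_pow_closed z_in_center)
  also have "\<dots> = u [^] (- (c * m))"
    using u by (simp add: int_pow_mult[symmetric])
  finally have shift: "z [^] (- e) \<otimes> (u [^] (- (c * m)) \<otimes> z [^] e) = u [^] (- (c * m))" .
  have "transvection u (- c) (transvection u c g)
      = g \<otimes> (u [^] (c * m) \<otimes> (z [^] (- e) \<otimes> (u [^] (- (c * m)) \<otimes> z [^] e)))"
    using u g by (simp add: transvection_def[of u "- c"] comm_log_transvection m_def[symmetric] e_def)
      (simp add: transvection_def m_def e_def m_assoc)
  also have "\<dots> = g"
    using u g by (simp add: shift int_pow_mult[symmetric])
  finally show ?thesis .
qed

lemma transvection_center: "u \<in> carrier G \<Longrightarrow> d \<in> Z \<Longrightarrow> transvection u c d = d"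
  by (simp add: transvection_def comm_log_center grp_center_closed)

lemma transvection_AutZ:
  assumes u: "u \<in> carrier G" "u [^] p = \<one>"
  shows "transvection u c \<in> AutZ G"
proof -
  have "transvection u c \<in> hom G G"
    by (auto simp: hom_def transvection_closed[OF u(1)] transvection_mult[OF u])
  moreover have "bij_betw (transvection u c) (carrier G) (carrier G)"
    by (rule bij_betw_byWitness[where f'="transvection u (- c)"])
      (use transvection_inverse[OF u] transvection_inverse[OF u, of _ "- c"] transvection_closed[OF u(1)]
        in auto)
  ultimately show ?thesis
    using transvection_center[OF u(1)] by (simp add: AutZ_def iso_def)
qed

lemma rcos_transvection:
  assumes u: "u \<in> carrier G" and g: "g \<in> carrier G"
  shows "Z #> transvection u c g = Z #> (g \<otimes> u [^] (c * comm_log u g))"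
proof -
  have "transvection u c g = z [^] (- (c * (comm_log u g)^2 * half)) \<otimes> (g \<otimes> u [^] (c * comm_log u g))"
    using u g grp_center_commute[OF grp_center_int_pow_closed[OF z_in_center]]
    by (simp add: transvection_def)
  then show ?thesis
    using u g by (simp add: rcos_grp_center_mult grp_center_int_pow_closed z_in_center)
qed

lemma mem_Q_orbit_if_comm_ne_one:
  assumes g: "g \<in> carrier G" and h: "h \<in> carrier G" and "g [^] p = h [^] p" and "comm g h \<noteq> \<one>"
  shows "Z #> h \<in> Q_orbit G (Z #> g)"
proof -
  define u where "u = inv g \<otimes> h"
  have u: "u \<in> carrier G" "u [^] p = \<one>"
    using g h assms(3) odd_p
    by (simp_all add: u_def nat_pow_mult_distrib_odd nat_pow_inv grp_center_pow_p grp_comm_in_center)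
  have "comm g u = comm g h"
    using g h by (simp add: u_def comm_mult_right comm_inv_right)
  then have "z [^] comm_log u g = comm g h"
    using z_pow_comm_log[OF g u(1)] by simp
  then have "\<not> int p dvd comm_log u g"
    using assms(4) z_int_pow_eq_iff[of 0 "comm_log u g"] by auto
  then have "coprime (comm_log u g) (int p)"
    using prime_p by (simp add: prime_imp_coprime_int coprime_commute)
  text \<open>With \<open>c\<close> inverse to \<open>B(g, u)\<close> modulo \<open>p\<close>, the transvection moves \<open>g Z\<close> to \<open>g u Z = h Z\<close>.\<close>
  then obtain c d where "c * comm_log u g + d * int p = 1"
    using bezout_int[of "comm_log u g" "int p"] by (auto simp: coprime_iff_gcd_eq_1)
  then have "1 - c * comm_log u g = int p * d"
    by (simp add: algebra_simps)
  then have "int p dvd 1 - c * comm_log u g" by simp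
  then have "u [^] (c * comm_log u g) = u"
    using int_pow_cong_p[OF u, of 1 "c * comm_log u g"] u(1) by simp
  then have "Z #> transvection u c g = Z #> h"
    using rcos_transvection[OF u(1) g, of c] g h by (simp add: u_def m_assoc[symmetric])
  then show ?thesis
    unfolding mem_Q_orbit_iff using transvection_AutZ[OF u] f_map_rcos[OF transvection_AutZ[OF u] g]
    by (metis f_map_def)
qed

lemma mem_Q_orbit_via:
  assumes g: "g \<in> carrier G" and h: "h \<in> carrier G" and k: "k \<in> carrier G"
    and "g [^] p = k [^] p" "h [^] p = k [^] p" and "comm g k \<noteq> \<one>" "comm h k \<noteq> \<one>"
  shows "Z #> h \<in> Q_orbit G (Z #> g)"
proof -
  have "comm k h \<noteq> \<one>"
  proof
    assume "comm k h = \<one>"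
    then have "inv (comm h k) = \<one>" using comm_swap[OF h k] by simp
    then have "comm h k = \<one>" using inv_inv[OF comm_closed[OF h k]] by simp
    with assms(7) show False ..
  qed
  then have "Z #> h \<in> Q_orbit G (Z #> k)"
    using mem_Q_orbit_if_comm_ne_one[OF k h] assms(5) by simp
  moreover have "Z #> k \<in> Q_orbit G (Z #> g)"
    using mem_Q_orbit_if_comm_ne_one[OF g k] assms(4,6) by simp
  ultimately show ?thesis by (rule Q_orbit_trans[rotated])
qed

lemma mem_Q_orbit_if_pow_p_ne_one:
  assumes g: "g \<in> carrier G" and h: "h \<in> carrier G" and "g [^] p = h [^] p" "g [^] p \<noteq> \<one>"
  shows "Z #> h \<in> Q_orbit G (Z #> g)"
proof (cases "comm g h = \<one>")
  case True
  define k where "k = g \<otimes> y 0"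
  have k: "k \<in> carrier G" using g by (simp add: k_def)
  have kp: "k [^] p = g [^] p"
    using nat_pow_mult_distrib_odd[OF g y0_closed odd_p] g
    by (simp add: k_def y0_pow_p grp_center_pow_p grp_comm_in_center)
  have "comm g k = g [^] p"
    using g by (simp add: k_def comm_mult_right pow_p_eq_comm_y0[OF g])
  moreover have "comm h k = h [^] p"
    using g h True comm_swap[OF g h] by (simp add: k_def comm_mult_right pow_p_eq_comm_y0[OF h])
  ultimately have "comm g k \<noteq> \<one>" "comm h k \<noteq> \<one>"
    using assms(3,4) by simp_all
  moreover have "h [^] p = k [^] p"
    using kp assms(3) by simp
  ultimately show ?thesis
    using mem_Q_orbit_via[OF g h k kp[symmetric]] by blast
next
  case False
  then show ?thesis by (rule mem_Q_orbit_if_comm_ne_one[OF g h assms(3)])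
qed

lemma in_span_y0_if_comm:
  assumes g: "g \<in> carrier G"
    and "\<And>i. i < n \<Longrightarrow> 0 < i \<Longrightarrow> comm g (x i) = \<one>" "\<And>i. i < n \<Longrightarrow> comm g (y i) = \<one>"
  shows "Z #> g \<in> {smult_V G k (Z #> y 0) | k. True}"
proof -
  define m where "m = z_log (comm g (x 0))"
  have zm: "z [^] m = comm g (x 0)"
    unfolding m_def using z_log grp_comm_in_center g by simp
  define c where "c = g \<otimes> y 0 [^] m"
  have c: "c \<in> carrier G" using g by (simp add: c_def)
  have comm_y0: "comm (y 0) (x i) = (if i = 0 then inv z else \<one>)" if "i < n" for i
    using that comm_swap[OF x_closed[OF that] y0_closed] comm_x_y_same comm_x_y[OF that basis_n_pos] by auto
  have comm_y0_y: "comm (y 0) (y i) = \<one>" if "i < n" for i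
    using that comm_y_y[OF basis_n_pos that] by (cases "i = 0") auto
  have "c \<in> Z"
  proof (rule grp_center_if_comm_basis[OF c])
    fix i assume i: "i < n"
    show "comm c (x i) = \<one>"
      using i g zm assms(2)[OF i] x_closed[OF i] comm_y0[OF i]
      by (cases "i = 0") (auto simp: c_def comm_mult_left comm_nat_pow_left nat_pow_inv)
    show "comm c (y i) = \<one>"
      using i g assms(3)[OF i] y_closed[OF i] comm_y0_y[OF i]
      by (simp add: c_def comm_mult_left comm_nat_pow_left)
  qed
  have "g = c \<otimes> y 0 [^] ((p - 1) * m)"
  proof -
    have "m + (p - 1) * m = p * m" using one_less_p by (cases p) auto
    then have "y 0 [^] m \<otimes> y 0 [^] ((p - 1) * m) = y 0 [^] (p * m)"
      by (simp only: nat_pow_mult[OF y0_closed])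
    also have "\<dots> = \<one>"
      by (simp add: nat_pow_pow[symmetric] y0_pow_p)
    finally have "y 0 [^] m \<otimes> y 0 [^] ((p - 1) * m) = \<one>" .
    then show ?thesis using g by (simp add: c_def m_assoc)
  qed
  then have "Z #> g = smult_V G ((p - 1) * m) (Z #> y 0)"
    using rcos_grp_center_mult[OF \<open>c \<in> Z\<close>] by (simp add: smult_V_rcos)
  then show ?thesis by blast
qed

lemma exists_comm_ne_one_if_not_in_span_y0:
  assumes "g \<in> carrier G" "Z #> g \<notin> {smult_V G k (Z #> y 0) | k. True}"
  obtains u where "u \<in> carrier G" "u [^] p = \<one>" "comm g u \<noteq> \<one>"
proof -
  have "\<not> ((\<forall>i. i < n \<longrightarrow> 0 < i \<longrightarrow> comm g (x i) = \<one>) \<and> (\<forall>i. i < n \<longrightarrow> comm g (y i) = \<one>))"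
    using in_span_y0_if_comm[OF assms(1)] assms(2) by blast
  then show thesis
    using that x_closed y_closed x_pow_p y_pow_p by blast
qed

lemma mem_Q_orbit_if_pow_p_eq_one:
  assumes g: "g \<in> carrier G" and h: "h \<in> carrier G" and "g [^] p = \<one>" "h [^] p = \<one>"
    and "Z #> g \<notin> {smult_V G k (Z #> y 0) | k. True}" "Z #> h \<notin> {smult_V G k (Z #> y 0) | k. True}"
  shows "Z #> h \<in> Q_orbit G (Z #> g)"
proof (cases "comm g h = \<one>")
  case True
  obtain u where u: "u \<in> carrier G" "u [^] p = \<one>" "comm g u \<noteq> \<one>"
    using exists_comm_ne_one_if_not_in_span_y0[OF g assms(5)] .
  obtain v where v: "v \<in> carrier G" "v [^] p = \<one>" "comm h v \<noteq> \<one>"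
    using exists_comm_ne_one_if_not_in_span_y0[OF h assms(6)] .
  text \<open>One of \<open>u\<close>, \<open>v\<close>, \<open>u v\<close> pairs nontrivially with both \<open>g\<close> and \<open>h\<close>.\<close>
  consider "comm h u \<noteq> \<one>" | "comm g v \<noteq> \<one>" | "comm h u = \<one>" "comm g v = \<one>"
    by blast
  then show ?thesis
  proof cases
    case 1
    then show ?thesis using mem_Q_orbit_via[OF g h u(1)] assms(3,4) u by simp
  next
    case 2
    then show ?thesis using mem_Q_orbit_via[OF g h v(1)] assms(3,4) v by simp
  next
    case 3
    have uv: "u \<otimes> v \<in> carrier G" "(u \<otimes> v) [^] p = \<one>"
      using u v odd_p by (simp_all add: nat_pow_mult_distrib_odd grp_center_pow_p grp_comm_in_center)
    have "comm g (u \<otimes> v) \<noteq> \<one>" "comm h (u \<otimes> v) \<noteq> \<one>"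
      using g h u v 3 by (simp_all add: comm_mult_right)
    then show ?thesis using mem_Q_orbit_via[OF g h uv(1)] assms(3,4) uv(2) by simp
  qed
next
  case False
  then show ?thesis using mem_Q_orbit_if_comm_ne_one[OF g h] assms(3,4) by simp
qed

lemma Q_orbit_same_Tmap:
  assumes "v \<in> Vnz G" "w \<in> Vnz G" "Tmap p G v = Tmap p G w"
    and "(Tmap p G v \<noteq> \<one> \<and> Tmap p G w \<noteq> \<one>) \<or>
      (v \<notin> {smult_V G k (Z #> y 0) | k. True} \<and> w \<notin> {smult_V G k (Z #> y 0) | k. True})"
  shows "w \<in> Q_orbit G v"
proof -
  obtain g h where g: "g \<in> carrier G" "v = Z #> g" and h: "h \<in> carrier G" "w = Z #> h"
    using assms(1,2) by (auto simp: Vnz_eq)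
  have T: "Tmap p G v = g [^] p" "Tmap p G w = h [^] p"
    using g h by (simp_all add: Tmap_rcos)
  show ?thesis
  proof (cases "g [^] p = \<one>")
    case True
    then have "h [^] p = \<one>" "Z #> g \<notin> {smult_V G k (Z #> y 0) | k. True}"
      "Z #> h \<notin> {smult_V G k (Z #> y 0) | k. True}"
      using assms(3,4) g(2) h(2) T by auto
    then show ?thesis
      using mem_Q_orbit_if_pow_p_eq_one[OF g(1) h(1) True] g(2) h(2) by simp
  next
    case False
    moreover have "g [^] p = h [^] p" using assms(3) T by simp
    ultimately show ?thesis
      using mem_Q_orbit_if_pow_p_ne_one[OF g(1) h(1)] g(2) h(2) by simp
  qed
qed

lemma x0_pow_pow_p: "(x 0 [^] (a::nat)) [^] p = z [^] a"
  by (simp add: nat_pow_swap[OF x0_closed, of a p] x0_pow_p)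

lemma Tmap_x0_pow: "Tmap p G (Z #> x 0 [^] (a::nat)) = z [^] a"
  by (simp add: Tmap_rcos x0_pow_pow_p)

lemma Tmap_y0_pow: "Tmap p G (Z #> y 0 [^] (b::nat)) = \<one>"
  by (simp add: Tmap_rcos nat_pow_swap[OF y0_closed, of b p] y0_pow_p)

lemma Tmap_x1: "2 \<le> n \<Longrightarrow> Tmap p G (Z #> x 1) = \<one>"
  by (simp add: Tmap_rcos x_closed x_pow_p)

lemma comm_x0_y0_pow: "comm (x 0) (y 0 [^] (b::nat)) = z [^] b"
  using comm_nat_pow_right[OF y0_closed x0_closed, of b] comm_x_y_same[OF basis_n_pos] by simp

lemma rcos_x0_pow_in_Vnz: "0 < a \<Longrightarrow> a < p \<Longrightarrow> Z #> x 0 [^] a \<in> Vnz G"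
  using grp_center_pow_p[of "x 0 [^] a"] z_pow_eq_one_iff[of a]
  by (intro rcos_in_Vnz) (auto simp: x0_pow_pow_p)

lemma rcos_y0_pow_in_Vnz: "0 < b \<Longrightarrow> b < p \<Longrightarrow> Z #> y 0 [^] b \<in> Vnz G"
  using comm_center_right[OF _ x0_closed, of "y 0 [^] b"] z_pow_eq_one_iff[of b]
  by (intro rcos_in_Vnz) (auto simp: comm_x0_y0_pow)

lemma rcos_x1_in_Vnz: "2 \<le> n \<Longrightarrow> Z #> x 1 \<in> Vnz G"
  using comm_center_left[of "x 1" "y 1"] comm_x_y_same[of 1] z_ne_one
  by (intro rcos_in_Vnz) (auto simp: x_closed y_closed)

lemma rcos_y0_pow_inj:
  assumes "Z #> y 0 [^] a = Z #> y 0 [^] b" "a < p" "b < p"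
  shows "a = b"
proof -
  obtain c where c: "c \<in> Z" "y 0 [^] a = c \<otimes> y 0 [^] b"
    using assms(1) rcos_grp_center_eq_iff by auto
  have "z [^] a = comm (x 0) (c \<otimes> y 0 [^] b)"
    by (simp flip: c(2) add: comm_x0_y0_pow)
  also have "\<dots> = z [^] b"
    using c grp_center_closed by (simp add: comm_mult_right comm_center_right comm_x0_y0_pow)
  finally show ?thesis using z_pow_inj assms(2,3) by blast
qed

lemma rcos_x1_not_in_span_y0:
  assumes "2 \<le> n"
  shows "Z #> x 1 \<notin> {smult_V G k (Z #> y 0) | k. True}"
proof
  assume "Z #> x 1 \<in> {smult_V G k (Z #> y 0) | k. True}"
  then obtain k where "Z #> x 1 = smult_V G k (Z #> y 0)"
    by blast
  then have "Z #> x 1 = Z #> y 0 [^] k"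
    by (simp add: smult_V_rcos)
  then obtain c where "c \<in> Z" "x 1 = c \<otimes> y 0 [^] k"
    using rcos_grp_center_eq_iff[of "x 1" "y 0 [^] k"] x_closed[of 1] assms by auto
  then have "comm (x 1) (y 1) = \<one>"
    using assms comm_y_y[of 0 1] grp_center_closed y_closed
    by (simp add: comm_mult_left comm_center_left comm_nat_pow_left)
  then show False using assms comm_x_y_same[of 1] z_ne_one by simp
qed

text \<open>The two \<open>Q\<close>-invariants separating the orbits: \<open>T\<close>, and membership in \<open>span(w\<^sub>1)\<close>, which
  \<open>Q\<close> fixes pointwise.\<close>

lemma Tmap_Q_orbit: "g \<in> carrier G \<Longrightarrow> w \<in> Q_orbit G (Z #> g) \<Longrightarrow> Tmap p G w = Tmap p G (Z #> g)"
  by (auto simp: mem_Q_orbit_iff Tmap_f_map f_map_def[symmetric])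

lemma Q_orbit_span_y0: "w \<in> Q_orbit G (smult_V G k (Z #> y 0)) \<Longrightarrow> w = smult_V G k (Z #> y 0)"
  by (auto simp: mem_Q_orbit_iff f_map_smult_y0 f_map_def[symmetric])

lemma Q_orbit_x0_pow_if_pow_p_ne_one:
  assumes g: "g \<in> carrier G" and "g [^] p \<noteq> \<one>"
  obtains a where "a \<in> {1..<p}" "Q_orbit G (Z #> g) = Q_orbit G (smult_V G a (Z #> x 0))"
proof -
  define a where "a = z_log (g [^] p)"
  have a: "z [^] a = g [^] p" "a < p"
    using z_log pow_p_in_center[OF g] by (auto simp: a_def)
  have "a \<noteq> 0"
  proof
    assume "a = 0"
    with a(1) assms(2) show False by simp
  qed
  have "(x 0 [^] a) [^] p = g [^] p"
    using a by (simp add: x0_pow_pow_p)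
  then have "Z #> x 0 [^] a \<in> Q_orbit G (Z #> g)"
    using mem_Q_orbit_if_pow_p_ne_one[OF g, of "x 0 [^] a"] assms(2) by simp
  then have "Q_orbit G (Z #> g) = Q_orbit G (smult_V G a (Z #> x 0))"
    using Q_orbit_eq[OF rcos_grp_center_subset[OF g]] by (simp add: smult_V_rcos)
  then show thesis
    by (rule that[rotated]) (use \<open>a \<noteq> 0\<close> a(2) in auto)
qed

lemma smult_y0_if_in_span_y0:
  assumes "v \<in> Vnz G" "v \<in> {smult_V G k (Z #> y 0) | k. True}"
  obtains b where "b \<in> {1..<p}" "v = smult_V G b (Z #> y 0)"
proof -
  obtain k where "v = smult_V G k (Z #> y 0)"
    using assms(2) by blast
  moreover have "y 0 [^] k = y 0 [^] (k mod p)"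
    by (metis mod_mult_div_eq nat_pow_mult nat_pow_pow y0_closed y0_pow_p nat_pow_one r_one
        nat_pow_closed)
  ultimately have vb: "v = smult_V G (k mod p) (Z #> y 0)"
    by (simp add: smult_V_rcos)
  moreover have "k mod p \<noteq> 0"
  proof
    assume "k mod p = 0"
    then have "v = Z"
      using vb by (simp add: smult_V_rcos subgroup.subset[OF grp_center_subgroup])
    then show False using assms(1) by (simp add: Vnz_def)
  qed
  ultimately show thesis
    by (intro that[of "k mod p"]) (use one_less_p in auto)
qed

lemma Q_orbit_x1_if_pow_p_eq_one:
  assumes g: "g \<in> carrier G" "g [^] p = \<one>" and "Z #> g \<notin> {smult_V G k (Z #> y 0) | k. True}"
  shows "2 \<le> n" "Q_orbit G (Z #> g) = Q_orbit G (Z #> x 1)"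
proof -
  show "2 \<le> n"
  proof (rule ccontr)
    assume "\<not> 2 \<le> n"
    then have "n = 1" using basis_n_pos by simp
    moreover have "comm g (y 0) = \<one>" using g pow_p_eq_comm_y0[OF g(1)] by simp
    ultimately show False
      using assms(3) in_span_y0_if_comm[OF g(1)] by auto
  qed
  then have "Z #> x 1 \<in> Q_orbit G (Z #> g)"
    using mem_Q_orbit_if_pow_p_eq_one[OF g(1) x_closed] assms x_pow_p rcos_x1_not_in_span_y0
    by simp
  then show "Q_orbit G (Z #> g) = Q_orbit G (Z #> x 1)"
    using Q_orbit_eq[OF rcos_grp_center_subset[OF g(1)]] by simp
qed

lemma Q_orbit_cases:
  assumes "v \<in> Vnz G"
  obtains a where "a \<in> {1..<p}" "Q_orbit G v = Q_orbit G (smult_V G a (Z #> x 0))"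
    | b where "b \<in> {1..<p}" "Q_orbit G v = Q_orbit G (smult_V G b (Z #> y 0))"
    | "2 \<le> n" "Q_orbit G v = Q_orbit G (Z #> x 1)"
proof -
  obtain g where g: "g \<in> carrier G" "v = Z #> g"
    using assms by (auto simp: Vnz_eq)
  consider "g [^] p \<noteq> \<one>" | "v \<in> {smult_V G k (Z #> y 0) | k. True}"
    | "g [^] p = \<one>" "v \<notin> {smult_V G k (Z #> y 0) | k. True}"
    by blast
  then show thesis
  proof cases
    case 1
    then obtain a where "a \<in> {1..<p}" "Q_orbit G (Z #> g) = Q_orbit G (smult_V G a (Z #> x 0))"
      using Q_orbit_x0_pow_if_pow_p_ne_one[OF g(1)] by blast
    then show thesis using that(1) g(2) by blast
  next
    case 2
    then obtain b where "b \<in> {1..<p}" "v = smult_V G b (Z #> y 0)"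
      using smult_y0_if_in_span_y0[OF assms] by blast
    then show thesis using that(2) by blast
  next
    case 3
    then show thesis using that(3) Q_orbit_x1_if_pow_p_eq_one[OF g(1)] g(2) by simp
  qed
qed

abbreviation orbits_x0 :: "'a set set set" where
  "orbits_x0 \<equiv> (\<lambda>a. Q_orbit G (smult_V G a (Z #> x 0))) ` {1..<p}"

abbreviation orbits_y0 :: "'a set set set" where
  "orbits_y0 \<equiv> (\<lambda>b. Q_orbit G (smult_V G b (Z #> y 0))) ` {1..<p}"

lemma Q_orbits_eq:
  "Q_orbit G ` Vnz G = orbits_x0 \<union> orbits_y0 \<union> (if 2 \<le> n then {Q_orbit G (Z #> x 1)} else {})"
proof
  show "Q_orbit G ` Vnz G \<subseteq> orbits_x0 \<union> orbits_y0 \<union> (if 2 \<le> n then {Q_orbit G (Z #> x 1)} else {})"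
    by (auto elim!: Q_orbit_cases)
  show "orbits_x0 \<union> orbits_y0 \<union> (if 2 \<le> n then {Q_orbit G (Z #> x 1)} else {}) \<subseteq> Q_orbit G ` Vnz G"
    using rcos_x0_pow_in_Vnz rcos_y0_pow_in_Vnz rcos_x1_in_Vnz by (auto simp: smult_V_rcos)
qed

lemma Tmap_eq_if_Q_orbit_eq:
  "g \<in> carrier G \<Longrightarrow> Q_orbit G (Z #> g) = Q_orbit G w \<Longrightarrow> Tmap p G w = Tmap p G (Z #> g)"
  using Tmap_Q_orbit Q_orbit_eq_imp_mem by blast

lemma inj_on_orbits_x0: "inj_on (\<lambda>a. Q_orbit G (smult_V G a (Z #> x 0))) {1..<p}"
proof (rule inj_onI)
  fix a a' assume a: "a \<in> {1..<p}" "a' \<in> {1..<p}"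
    and "Q_orbit G (smult_V G a (Z #> x 0)) = Q_orbit G (smult_V G a' (Z #> x 0))"
  then have "Tmap p G (Z #> x 0 [^] a') = Tmap p G (Z #> x 0 [^] a)"
    by (intro Tmap_eq_if_Q_orbit_eq) (simp_all add: smult_V_rcos)
  then show "a = a'"
    using z_pow_inj a by (simp add: Tmap_x0_pow)
qed

lemma inj_on_orbits_y0: "inj_on (\<lambda>b. Q_orbit G (smult_V G b (Z #> y 0))) {1..<p}"
proof (rule inj_onI)
  fix b b' assume b: "b \<in> {1..<p}" "b' \<in> {1..<p}"
    and "Q_orbit G (smult_V G b (Z #> y 0)) = Q_orbit G (smult_V G b' (Z #> y 0))"
  then have "smult_V G b' (Z #> y 0) = smult_V G b (Z #> y 0)"
    by (intro Q_orbit_span_y0 Q_orbit_eq_imp_mem)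
  then show "b = b'"
    using rcos_y0_pow_inj b by (simp add: smult_V_rcos)
qed

lemma orbits_x0_y0_disjoint: "orbits_x0 \<inter> orbits_y0 = {}"
proof -
  have "Q_orbit G (smult_V G a (Z #> x 0)) \<noteq> Q_orbit G (smult_V G b (Z #> y 0))"
    if "a \<in> {1..<p}" for a b
  proof
    assume "Q_orbit G (smult_V G a (Z #> x 0)) = Q_orbit G (smult_V G b (Z #> y 0))"
    then have "Tmap p G (Z #> y 0 [^] b) = Tmap p G (Z #> x 0 [^] a)"
      by (intro Tmap_eq_if_Q_orbit_eq) (simp_all add: smult_V_rcos)
    then show False
      using that z_pow_eq_one_iff[of a] by (simp add: Tmap_x0_pow Tmap_y0_pow)
  qed
  then show ?thesis by blast
qed

lemma Q_orbit_x1_notin: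
  assumes "2 \<le> n"
  shows "Q_orbit G (Z #> x 1) \<notin> orbits_x0 \<union> orbits_y0"
proof -
  have "Q_orbit G (smult_V G a (Z #> x 0)) \<noteq> Q_orbit G (Z #> x 1)" if "a \<in> {1..<p}" for a
  proof
    assume "Q_orbit G (smult_V G a (Z #> x 0)) = Q_orbit G (Z #> x 1)"
    then have "Tmap p G (Z #> x 1) = Tmap p G (Z #> x 0 [^] a)"
      by (intro Tmap_eq_if_Q_orbit_eq) (simp_all add: smult_V_rcos)
    then show False
      using that z_pow_eq_one_iff[of a] Tmap_x1[OF assms] by (simp add: Tmap_x0_pow)
  qed
  moreover have "Q_orbit G (smult_V G b (Z #> y 0)) \<noteq> Q_orbit G (Z #> x 1)" for b
  proof
    assume "Q_orbit G (smult_V G b (Z #> y 0)) = Q_orbit G (Z #> x 1)"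
    then have "Z #> x 1 = smult_V G b (Z #> y 0)"
      by (intro Q_orbit_span_y0 Q_orbit_eq_imp_mem)
    then show False
      using rcos_x1_not_in_span_y0[OF assms] by blast
  qed
  ultimately show ?thesis by blast
qed

lemma card_orbits_x0_y0: "card (orbits_x0 \<union> orbits_y0) = 2 * p - 2"
  using card_Un_disjoint[OF _ _ orbits_x0_y0_disjoint] card_image[OF inj_on_orbits_x0]
    card_image[OF inj_on_orbits_y0]
  by simp

lemma order_eq_p_cube_iff: "order G = p ^ 3 \<longleftrightarrow> n = 1"
  and p_cube_less_order_iff: "p ^ 3 < order G \<longleftrightarrow> 2 \<le> n"
proof -
  have "order G = p ^ 3 \<longleftrightarrow> 2 * n + 1 = 3" "p ^ 3 < order G \<longleftrightarrow> 3 < 2 * n + 1"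
    by (simp_all only: order_eq power_inject_exp[OF one_less_p] power_strict_increasing_iff[OF one_less_p])
  then show "order G = p ^ 3 \<longleftrightarrow> n = 1" "p ^ 3 < order G \<longleftrightarrow> 2 \<le> n"
    by auto
qed

end

lemma extraspecial_basis_if_extraspecial:
  assumes "Factorial_Ring.prime p" "odd p" "extraspecial_p_group p G"
    and "z \<in> grp_center G" "z \<noteq> \<one>\<^bsub>G\<^esub>" "special_symplectic_basis p G z n x y"
  shows "extraspecial_basis G p z n x y"
proof -
  have grp: "group G" and center: "grp_center G = derived G (carrier G)"
    and "elementary_abelian_subgroup p (grp_center G) G" and card: "card (grp_center G) = p"
    using assms(3) by (auto simp: extraspecial_p_group_def special_p_group_def p_group_def)
  then have "c [^]\<^bsub>G\<^esub> p = \<one>\<^bsub>G\<^esub>" if "c \<in> grp_center G" for c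
    using that by (auto simp: elementary_abelian_subgroup_def)
  moreover have "grp_comm G g h \<in> grp_center G" if "g \<in> carrier G" "h \<in> carrier G" for g h
    unfolding center derived_def grp_comm_def using that by (blast intro: generate.incl)
  ultimately show ?thesis
    using grp card assms(1,2,4-6)
    by (intro extraspecial_basis.intro class_two_group.intro extraspecial_basis_axioms.intro
        class_two_group_axioms.intro) auto
qed

theorem lemma4p7:
  fixes G :: "('a, 'b) monoid_scheme" and p n :: nat and z :: 'a and x y :: "nat \<Rightarrow> 'a"
  assumes "Factorial_Ring.prime p" and "odd p"
    and "extraspecial_p_group p G"
    and "grp_exponent G = p ^ 2"
    and "z \<in> grp_center G" and "z \<noteq> \<one>\<^bsub>G\<^esub>"
    and "special_symplectic_basis p G z n x y"
  shows
    "(\<forall>v \<in> Vnz G. \<forall>w \<in> Vnz G. v \<noteq> w \<and> Tmap p G v = Tmap p G w \<and>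
        ((Tmap p G v \<noteq> \<one>\<^bsub>G\<^esub> \<and> Tmap p G w \<noteq> \<one>\<^bsub>G\<^esub>) \<or>
         (v \<notin> {smult_V G k (grp_center G #>\<^bsub>G\<^esub> y 0) | k. True} \<and>
          w \<notin> {smult_V G k (grp_center G #>\<^bsub>G\<^esub> y 0) | k. True}))
        \<longrightarrow> w \<in> Q_orbit G v)
   \<and> (order G = p ^ 3 \<longrightarrow>
        Q_orbit G ` Vnz G =
          {Q_orbit G (smult_V G a (grp_center G #>\<^bsub>G\<^esub> x 0)) | a. a \<in> {1..<p}} \<union>
          {Q_orbit G (smult_V G b (grp_center G #>\<^bsub>G\<^esub> y 0)) | b. b \<in> {1..<p}}
        \<and> card (Q_orbit G ` Vnz G) = 2 * p - 2)
   \<and> (order G > p ^ 3 \<longrightarrow>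
        Q_orbit G ` Vnz G =
          {Q_orbit G (smult_V G a (grp_center G #>\<^bsub>G\<^esub> x 0)) | a. a \<in> {1..<p}} \<union>
          {Q_orbit G (smult_V G b (grp_center G #>\<^bsub>G\<^esub> y 0)) | b. b \<in> {1..<p}} \<union>
          {Q_orbit G (grp_center G #>\<^bsub>G\<^esub> x 1)}
        \<and> card (Q_orbit G ` Vnz G) = 2 * p - 1)"
proof -
  interpret extraspecial_basis G p z n x y
    using assms(1-3,5-7) by (rule extraspecial_basis_if_extraspecial)
  have "2 * p - 2 + 1 = 2 * p - 1"
    using one_less_p by simp
  then show ?thesis
    unfolding Setcompr_eq_image order_eq_p_cube_iff p_cube_less_order_iff
    using Q_orbit_same_Tmap Q_orbits_eq card_orbits_x0_y0 Q_orbit_x1_notin by auto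
qed

end
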